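(* Let $r$ be a positive integer. Then $\omega(n)\to\infty$ as $n\to\infty$ through elements of $F_r$.
   Context: For a positive integer $r$, $S_r$ is the multiplicative arithmetic function with $S_r(p^{\alpha})=0$ if $p\leq r$ and $S_r(p^{\alpha})=p^{\alpha-1}(p-r)$ if $p>r$, for all primes $p$ and positive integers $\alpha$. $B_r=\{n\in\mathbb{N}: S_r(n)>0\}$ (positive integers whose smallest prime factor exceeds $r$, together with $1$). $F_r$ is the set of $n\in B_r$ such that $S_r(n)<S_r(m)$ for all $m\in B_r$ with $m>n$. $\omega(n)$ is the number of distinct prime factors of $n$. *)

theory Defs
  imports "HOL-Computational_Algebra.Primes"
begin

definition S :: "nat \<Rightarrow> nat \<Rightarrow> nat" where
  "S r n = (\<Prod>p\<in>prime_factors n.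
      (if p \<le> r then 0 else p ^ (multiplicity p n - 1) * (p - r)))"

definition B :: "nat \<Rightarrow> nat set" where
  "B r = {n. n \<ge> 1 \<and> S r n > 0}"

definition F :: "nat \<Rightarrow> nat set" where
  "F r = {n \<in> B r. \<forall>m \<in> B r. m > n \<longrightarrow> S r n < S r m}"

definition omega :: "nat \<Rightarrow> nat" where
  "omega n = card (prime_factors n)"

end

theory Submission
  imports Defs Complex_Main
begin

text \<open>If \<omega>(n) stayed below K along F_r, choose N so that there are at least K primes in (r, N],
  let T be the set of these primes and P their product.  Every n has, within distance
  C = P (r! + 1) above it, a number m all of whose prime factors exceed r and which is divisible
  by every prime of T (take m = P (r! k + 1)).  Writing S_r(n) = n \<delta>(n) with
  \<delta>(n) = \<Prod>_{p | n} (1 - r/p), the set of prime factors of m contains T, which has more primes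
  than n has and all of them at most N; hence \<delta>(m) \<le> (1 - r/N) \<delta>(n).  For n \<ge> C N this gives
  S_r(m) \<le> (n + C)(1 - r/N) \<delta>(n) \<le> S_r(n), contradicting n \<in> F_r.\<close>

definition sieve_density :: "nat \<Rightarrow> nat set \<Rightarrow> real" where
  "sieve_density r Q = (\<Prod>p\<in>Q. 1 - real r / real p)"

lemma mem_B_iff: "n \<in> B r \<longleftrightarrow> n \<ge> 1 \<and> (\<forall>p\<in>prime_factors n. r < p)"
proof -
  have "S r n > 0 \<longleftrightarrow> (\<forall>p\<in>prime_factors n. r < p)"
    unfolding S_def by (subst prod_pos_nat_iff) (auto simp: prime_gt_0_nat)
  then show ?thesis
    unfolding B_def by auto
qed

lemma S_eq_times_sieve_density:
  assumes "n \<ge> 1" "\<forall>p\<in>prime_factors n. r < p"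
  shows "real (S r n) = real n * sieve_density r (prime_factors n)"
proof -
  have "real (S r n) = (\<Prod>p\<in>prime_factors n. real p ^ multiplicity p n * (1 - real r / real p))"
    unfolding S_def of_nat_prod
  proof (intro prod.cong refl)
    fix p assume p: "p \<in> prime_factors n"
    then obtain k where k: "multiplicity p n = Suc k"
      using prime_factors_multiplicity not0_implies_Suc by blast
    have "real p > 0"
      using p prime_gt_0_nat by auto
    then show "real (if p \<le> r then 0 else p ^ (multiplicity p n - 1) * (p - r))
        = real p ^ multiplicity p n * (1 - real r / real p)"
      using assms(2) p k by (auto simp: of_nat_diff field_simps)
  qed
  also have "\<dots> = real (\<Prod>p\<in>prime_factors n. p ^ multiplicity p n) * sieve_density r (prime_factors n)"
    unfolding sieve_density_def of_nat_prod by (simp add: prod.distrib)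
  also have "(\<Prod>p\<in>prime_factors n. p ^ multiplicity p n) = n"
    using prod_prime_factors[of n] assms(1) by simp
  finally show ?thesis .
qed

lemma sieve_density_nonneg: "\<forall>p\<in>Q. r < p \<Longrightarrow> 0 \<le> sieve_density r Q"
  unfolding sieve_density_def by (intro prod_nonneg) auto

lemma sieve_density_antimono:
  assumes "finite Q'" "Q \<subseteq> Q'" "\<forall>p\<in>Q'. r < p"
  shows "sieve_density r Q' \<le> sieve_density r Q"
proof -
  have "sieve_density r Q' = sieve_density r Q * sieve_density r (Q' - Q)"
    unfolding sieve_density_def by (simp add: prod.subset_diff[OF assms(2,1)] mult.commute)
  moreover have "sieve_density r (Q' - Q) \<le> 1"
    unfolding sieve_density_def using assms(3) by (intro prod_le_1) auto
  moreover have "0 \<le> sieve_density r Q"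
    using assms by (intro sieve_density_nonneg) auto
  ultimately show ?thesis
    by (simp add: mult_left_le)
qed

lemma sieve_density_le_power:
  assumes "\<forall>p\<in>Q. r < p \<and> p \<le> N"
  shows "sieve_density r Q \<le> (1 - real r / real N) ^ card Q"
proof -
  have "sieve_density r Q \<le> (\<Prod>p\<in>Q. 1 - real r / real N)"
    unfolding sieve_density_def using assms
    by (intro prod_mono) (auto intro!: divide_left_mono)
  then show ?thesis
    by simp
qed

lemma power_le_sieve_density:
  assumes "r < N" "\<forall>p\<in>Q. N < p"
  shows "(1 - real r / real N) ^ card Q \<le> sieve_density r Q"
proof -
  have "(\<Prod>p\<in>Q. 1 - real r / real N) \<le> sieve_density r Q"
    unfolding sieve_density_def using assms
    by (intro prod_mono) (auto intro!: divide_left_mono)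
  then show ?thesis
    by simp
qed

text \<open>Only the primes outside Q \<inter> T matter: T - Q has more elements than Q - T, and each of
  them contributes a factor at most 1 - r/N, while each prime of Q - T contributes at least that.\<close>
lemma sieve_density_more_small_primes:
  assumes "finite Q" "finite T" "\<forall>p\<in>Q. r < p" "\<forall>p\<in>T. r < p \<and> p \<le> N"
    and "\<forall>p\<in>Q - T. N < p" and "card Q < card T"
  shows "sieve_density r T \<le> (1 - real r / real N) * sieve_density r Q"
proof -
  define b where "b = 1 - real r / real N"
  obtain p where "p \<in> T"
    using assms(6) by fastforce
  then have "r < N"
    using assms(4) by force
  then have b: "0 \<le> b" "b \<le> 1"
    by (auto simp: b_def field_simps)
  have "card Q - card (Q \<inter> T) < card T - card (Q \<inter> T)"
    using assms(1,6) card_mono[OF assms(1) Int_lower1, of T] by linarith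
  then have card_less: "card (Q - T) < card (T - Q)"
    using assms(1,2) by (simp add: card_Diff_subset_Int Int_commute)
  have split: "sieve_density r A = sieve_density r (Q \<inter> T) * sieve_density r (A - (Q \<inter> T))"
    if "finite A" "Q \<inter> T \<subseteq> A" for A
    unfolding sieve_density_def using prod.subset_diff[OF that(2,1)] by (simp add: mult.commute)
  have "sieve_density r (T - Q) \<le> b ^ card (T - Q)"
    unfolding b_def using assms(4) by (intro sieve_density_le_power) auto
  also have "\<dots> \<le> b ^ Suc (card (Q - T))"
    using b card_less by (intro power_decreasing) auto
  also have "\<dots> \<le> b * sieve_density r (Q - T)"
    unfolding power_Suc b_def using assms(5) \<open>r < N\<close> b
    by (intro mult_left_mono power_le_sieve_density) (auto simp: b_def)
  finally have "sieve_density r (Q \<inter> T) * sieve_density r (T - Q)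
      \<le> sieve_density r (Q \<inter> T) * (b * sieve_density r (Q - T))"
    using assms(3) by (intro mult_left_mono sieve_density_nonneg) auto
  moreover have "T - Q \<inter> T = T - Q" "Q - Q \<inter> T = Q - T"
    by auto
  ultimately show ?thesis
    using split[of T] split[of Q] assms(1,2) unfolding b_def[symmetric]
    by (simp add: ac_simps)
qed

text \<open>Shifting from n to the next number of the form P (r! k + 1) costs at most P (r! + 1);
  such numbers are divisible by all of T and coprime to every prime at most r.\<close>
lemma B_multiple_nearby:
  assumes "finite T" "\<forall>p\<in>T. prime p \<and> r < p"
  shows "\<exists>m\<in>B r. n < m \<and> m \<le> n + \<Prod>T * (fact r + 1) \<and> T \<subseteq> prime_factors m"
proof -
  define P where "P = \<Prod>T"
  define L :: nat where "L = fact r"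
  define t where "t = n div (P * L)"
  define m where "m = P * (L * (t + 1) + 1)"
  have "P > 0"
    unfolding P_def using assms(2) prime_gt_0_nat by (intro prod_pos) blast
  moreover have "L > 0"
    unfolding L_def by simp
  ultimately have "n mod (P * L) < P * L"
    by simp
  moreover have n_eq: "P * L * t + n mod (P * L) = n"
    unfolding t_def by simp
  ultimately have "n < P * L * (t + 1)"
    by (simp add: algebra_simps)
  also have "\<dots> < m"
    unfolding m_def using \<open>P > 0\<close> by (simp add: algebra_simps)
  finally have "n < m" .
  have "m \<le> n + P * (L + 1)"
    unfolding m_def using n_eq by (simp add: algebra_simps)
  have large_factors: "r < q" if "q \<in> prime_factors m" for q
  proof -
    have q: "prime q" "q dvd P * (L * (t + 1) + 1)"
      using that unfolding m_def by auto
    then consider "q dvd P" | "q dvd L * (t + 1) + 1"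
      using prime_dvd_mult_iff by blast
    then show "r < q"
    proof cases
      case 1
      then obtain p where "p \<in> T" "q dvd p"
        unfolding P_def using prime_dvd_prod_iff[OF assms(1) q(1)] by auto
      then show ?thesis
        using assms(2) q(1) primes_dvd_imp_eq by blast
    next
      case 2
      show ?thesis
      proof (rule ccontr)
        assume "\<not> r < q"
        then have "q dvd L"
          unfolding L_def using q(1) by (intro dvd_fact) (auto dest: prime_gt_0_nat)
        then have "q dvd L * (t + 1)"
          by simp
        then have "q dvd 1"
          using 2 dvd_add_right_iff by blast
        then show False
          using q(1) by simp
      qed
    qed
  qed
  have "T \<subseteq> prime_factors m"
  proof
    fix p assume "p \<in> T"
    then have "p dvd P"
      unfolding P_def using assms(1) dvd_prodI[of T p id] by simp
    then have "p dvd m"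
      unfolding m_def by simp
    then show "p \<in> prime_factors m"
      using \<open>p \<in> T\<close> \<open>n < m\<close> assms(2) by (intro prime_factorsI) auto
  qed
  moreover have "m \<in> B r"
    unfolding mem_B_iff using \<open>n < m\<close> large_factors by auto
  ultimately show ?thesis
    using \<open>n < m\<close> \<open>m \<le> n + P * (L + 1)\<close> unfolding P_def L_def by blast
qed

lemma card_primes_between_unbounded: "\<exists>N. K \<le> card {p::nat. prime p \<and> r < p \<and> p \<le> N}"
proof -
  have "infinite ({p::nat. prime p} - {..r})"
    using primes_infinite by (intro Diff_infinite_finite) auto
  then obtain T where T: "T \<subseteq> {p. prime p} - {..r}" "finite T" "card T = K"
    using infinite_arbitrarily_large by blast
  then have "T \<subseteq> {p. prime p \<and> r < p \<and> p \<le> Max T}"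
    by auto
  then have "K \<le> card {p. prime p \<and> r < p \<and> p \<le> Max T}"
    unfolding T(3)[symmetric] by (rule card_mono[rotated]) auto
  then show ?thesis ..
qed

lemma S_le_of_more_small_prime_factors:
  assumes "r \<ge> 1" "n \<in> B r" "m \<in> B r" "m \<le> n + C" "C * N \<le> n"
    and "finite T" "\<forall>p\<in>T. r < p \<and> p \<le> N" "T \<subseteq> prime_factors m"
    and "\<forall>p\<in>prime_factors n - T. N < p" "card (prime_factors n) < card T"
  shows "S r m \<le> S r n"
proof -
  obtain p where "p \<in> T"
    using assms(10) by fastforce
  then have "r < N"
    using assms(7) by force
  have "n \<ge> 1" and n_factors: "\<forall>p\<in>prime_factors n. r < p"
    and "m \<ge> 1" and m_factors: "\<forall>p\<in>prime_factors m. r < p"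
    using assms(2,3) unfolding mem_B_iff by auto
  have "real (S r m) = real m * sieve_density r (prime_factors m)"
    using S_eq_times_sieve_density \<open>m \<ge> 1\<close> m_factors by blast
  also have "\<dots> \<le> real (n + C) * sieve_density r T"
    using assms(4,7,8) m_factors
    by (intro mult_mono sieve_density_antimono sieve_density_nonneg) auto
  also have "\<dots> \<le> real (n + C) * ((1 - real r / real N) * sieve_density r (prime_factors n))"
    using sieve_density_more_small_primes[OF _ assms(6) n_factors assms(7,9,10)]
    by (intro mult_left_mono) auto
  also have "\<dots> \<le> real n * sieve_density r (prime_factors n)"
  proof -
    have "C * N \<le> n * r"
      using assms(1,5) by (metis le_trans mult.right_neutral mult_le_mono2)
    then have "real C * real N \<le> real n * real r"
      by (simp flip: of_nat_mult)
    then have "real (n + C) * (1 - real r / real N) \<le> real n"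
      using \<open>r < N\<close> by (simp add: field_simps add_increasing)
    from mult_right_mono[OF this sieve_density_nonneg[OF n_factors]] show ?thesis
      by (simp add: mult.assoc)
  qed
  also have "\<dots> = real (S r n)"
    using S_eq_times_sieve_density \<open>n \<ge> 1\<close> n_factors by simp
  finally show ?thesis
    by simp
qed

lemma F_omega_eventually_ge:
  assumes "r \<ge> 1"
  shows "\<exists>N0. \<forall>n\<ge>N0. n \<in> F r \<longrightarrow> K \<le> omega n"
proof -
  obtain N where N: "K \<le> card {p. prime p \<and> r < p \<and> p \<le> N}"
    using card_primes_between_unbounded by blast
  define T where "T = {p. prime p \<and> r < p \<and> p \<le> N}"
  define C where "C = \<Prod>T * (fact r + 1)"
  have "finite T" and T: "\<forall>p\<in>T. prime p \<and> r < p \<and> p \<le> N"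
    unfolding T_def by auto
  have "K \<le> omega n" if "C * N \<le> n" "n \<in> F r" for n
  proof (rule ccontr)
    assume "\<not> K \<le> omega n"
    then have "card (prime_factors n) < card T"
      using N unfolding omega_def T_def by linarith
    moreover obtain m where m: "m \<in> B r" "n < m" "m \<le> n + C" "T \<subseteq> prime_factors m"
      using B_multiple_nearby[of T r n] \<open>finite T\<close> T unfolding C_def by auto
    moreover have "n \<in> B r" "\<forall>p\<in>prime_factors n - T. N < p"
      using that(2) unfolding F_def mem_B_iff T_def by auto
    ultimately have "S r m \<le> S r n"
      using T by (intro S_le_of_more_small_prime_factors[OF assms _ _ _ that(1) \<open>finite T\<close>]) auto
    moreover have "S r n < S r m"
      using that(2) m unfolding F_def by auto
    ultimately show False
      by simp
  qed
  then show ?thesis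
    by blast
qed

theorem corollary3p1:
  fixes r :: nat
  assumes "r \<ge> 1"
  shows "filterlim omega at_top (inf at_top (principal (F r)))"
  unfolding filterlim_at_top eventually_inf_principal eventually_at_top_linorder
  using F_omega_eventually_ge[OF assms] by blast

end
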